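(* Let $G$ be a finite simple connected well-dominated graph of order at least $3$. If the Cartesian product $G \,\square\, H$ is well-dominated for some finite simple connected graph $H$ of order at least $2$, then the minimum degree of $G$ satisfies $\delta(G) \ge 2$.
   Context: A graph is well-dominated if every minimal (with respect to inclusion) dominating set is a minimum dominating set. The Cartesian product $G\,\square\, H$ has vertex set $V(G)\times V(H)$, with $(g_1,h_1)$ adjacent to $(g_2,h_2)$ iff either ($g_1=g_2$ and $h_1h_2\in E(H)$) or ($h_1=h_2$ and $g_1g_2\in E(G)$). *)

theory Defs
  imports Main
begin

definition fin_simple_graph :: "'a set \<Rightarrow> 'a set set \<Rightarrow> bool" where
  "fin_simple_graph V E \<longleftrightarrow> finite V \<and> (\<forall>e\<in>E. e \<subseteq> V \<and> card e = 2)"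

definition adj :: "'a set set \<Rightarrow> 'a \<Rightarrow> 'a \<Rightarrow> bool" where
  "adj E u v \<longleftrightarrow> {u, v} \<in> E"

definition neighbours :: "'a set \<Rightarrow> 'a set set \<Rightarrow> 'a \<Rightarrow> 'a set" where
  "neighbours V E v = {u \<in> V. adj E v u}"

definition degree :: "'a set \<Rightarrow> 'a set set \<Rightarrow> 'a \<Rightarrow> nat" where
  "degree V E v = card (neighbours V E v)"

definition min_degree :: "'a set \<Rightarrow> 'a set set \<Rightarrow> nat" where
  "min_degree V E = Min (degree V E ` V)"

definition connected_graph :: "'a set \<Rightarrow> 'a set set \<Rightarrow> bool" where
  "connected_graph V E \<longleftrightarrow> V \<noteq> {} \<and>
     (\<forall>u\<in>V. \<forall>v\<in>V. (u, v) \<in> {(x, y). x \<in> V \<and> y \<in> V \<and> adj E x y}\<^sup>*)"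

definition dominating :: "'a set \<Rightarrow> 'a set set \<Rightarrow> 'a set \<Rightarrow> bool" where
  "dominating V E D \<longleftrightarrow> D \<subseteq> V \<and> (\<forall>v\<in>V. v \<in> D \<or> (\<exists>u\<in>D. adj E u v))"

definition minimal_dominating :: "'a set \<Rightarrow> 'a set set \<Rightarrow> 'a set \<Rightarrow> bool" where
  "minimal_dominating V E D \<longleftrightarrow> dominating V E D \<and> (\<forall>D'. D' \<subset> D \<longrightarrow> \<not> dominating V E D')"

definition minimum_dominating :: "'a set \<Rightarrow> 'a set set \<Rightarrow> 'a set \<Rightarrow> bool" where
  "minimum_dominating V E D \<longleftrightarrow> dominating V E D \<and> (\<forall>D'. dominating V E D' \<longrightarrow> card D \<le> card D')"

definition well_dominated :: "'a set \<Rightarrow> 'a set set \<Rightarrow> bool" where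
  "well_dominated V E \<longleftrightarrow> (\<forall>D. minimal_dominating V E D \<longrightarrow> minimum_dominating V E D)"

definition cart_edges :: "'a set \<Rightarrow> 'a set set \<Rightarrow> 'b set \<Rightarrow> 'b set set \<Rightarrow> ('a \<times> 'b) set set" where
  "cart_edges VG EG VH EH =
     {{(g, h1), (g, h2)} | g h1 h2. g \<in> VG \<and> {h1, h2} \<in> EH} \<union>
     {{(g1, h), (g2, h)} | g1 g2 h. h \<in> VH \<and> {g1, g2} \<in> EG}"

end

theory Submission
  imports Defs
begin

text \<open>
  Suppose G has a vertex x of degree at most one. As G is connected with at least three vertices,
  x is a leaf whose neighbour y has a further neighbour z. A maximal independent set I containing
  x and z is a minimal dominating set of G, and so is a minimum dominating set A in which every
  vertex has an external private neighbour (Bollobas and Cockayne); since G is well-dominated,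
  |I| = |A|. Private neighbours make A \<times> V(H) a minimal dominating set of G \<box> H, whereas
  I \<times> V(H) stays dominating after removing (x, h) for any vertex h of H: the copies of y are
  dominated through those of z, and (x, h) through (x, h') for a neighbour h' of h. This
  dominating set has fewer vertices than A \<times> V(H), so G \<box> H is not well-dominated.
\<close>

lemma adj_commute: "adj E u v \<longleftrightarrow> adj E v u"
  by (simp add: adj_def insert_commute)

lemma adj_irrefl: "fin_simple_graph V E \<Longrightarrow> \<not> adj E u u"
  by (auto simp: fin_simple_graph_def adj_def)

lemma adj_in_vertices: "fin_simple_graph V E \<Longrightarrow> adj E u v \<Longrightarrow> u \<in> V \<and> v \<in> V"
  by (auto simp: fin_simple_graph_def adj_def)

lemma rtrancl_crosses_boundary:
  "(a, b) \<in> R\<^sup>* \<Longrightarrow> a \<notin> S \<Longrightarrow> b \<in> S \<Longrightarrow> \<exists>c d. (c, d) \<in> R \<and> c \<notin> S \<and> d \<in> S"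
  by (induction rule: converse_rtrancl_induct) blast+

lemma connected_graph_edge_into:
  assumes "connected_graph V E" "u \<in> S" "S \<subseteq> V" "v \<in> V - S"
  shows "\<exists>c\<in>V - S. \<exists>d\<in>S. adj E c d"
proof -
  have "(v, u) \<in> {(x, y). x \<in> V \<and> y \<in> V \<and> adj E x y}\<^sup>*"
    using assms by (auto simp: connected_graph_def)
  from rtrancl_crosses_boundary[OF this, of S] assms(2,4) show ?thesis by blast
qed

lemma connected_graph_has_neighbour:
  assumes "connected_graph V E" "finite V" "card V \<ge> 2" "v \<in> V"
  shows "\<exists>u\<in>V. adj E v u"
proof -
  have "\<not> V \<subseteq> {v}"
    using assms(3) card_mono[of "{v}" V] by auto
  then obtain w where "w \<in> V - {v}" by blast
  with connected_graph_edge_into[OF assms(1), of v "{v}"] assms(4) show ?thesis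
    by (auto simp: adj_commute)
qed

lemma degree_less_2_neighbour_unique:
  assumes "finite V" "degree V E x < 2" "u \<in> V" "u' \<in> V" "adj E x u" "adj E x u'"
  shows "u = u'"
proof (rule ccontr)
  assume "u \<noteq> u'"
  have "{u, u'} \<subseteq> neighbours V E x" using assms by (auto simp: neighbours_def)
  then have "card {u, u'} \<le> degree V E x"
    unfolding degree_def using assms(1) by (intro card_mono) (auto simp: neighbours_def)
  with \<open>u \<noteq> u'\<close> assms(2) show False by simp
qed

lemma low_degree_vertex_is_leaf_of_path:
  assumes G: "fin_simple_graph V E" "connected_graph V E" "card V \<ge> 3"
    and x: "x \<in> V" "degree V E x < 2"
  obtains y z where "adj E x y" "adj E y z" "z \<in> V" "z \<noteq> x" "\<And>u. adj E x u \<Longrightarrow> u = y"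
proof -
  have fin: "finite V" using G(1) by (simp add: fin_simple_graph_def)
  obtain y where y: "y \<in> V" "adj E x y"
    using connected_graph_has_neighbour[OF G(2) fin _ x(1)] G(3) by auto
  have leaf: "u = y" if "adj E x u" for u
    using degree_less_2_neighbour_unique[OF fin x(2) _ y(1) that y(2)] adj_in_vertices[OF G(1) that]
    by blast
  have "\<not> V \<subseteq> {x, y}"
    using G(3) card_mono[of "{x, y}" V] by (auto simp: card_insert_if split: if_splits)
  then obtain w where "w \<in> V - {x, y}" by blast
  with connected_graph_edge_into[OF G(2), of x "{x, y}"] x(1) y(1)
  obtain c d where c: "c \<in> V - {x, y}" "d \<in> {x, y}" "adj E c d" by blast
  have "d = y" using c leaf[of c] by (auto simp: adj_commute)
  with c that[OF y(2) _ _ _ leaf] show ?thesis by (auto simp: adj_commute)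
qed

lemma exists_vertex_of_min_degree:
  "finite V \<Longrightarrow> V \<noteq> {} \<Longrightarrow> \<exists>x\<in>V. degree V E x = min_degree V E"
  unfolding min_degree_def by (metis Min_in finite_imageI image_iff image_is_empty)

definition independent :: "'a set set \<Rightarrow> 'a set \<Rightarrow> bool" where
  "independent E S \<longleftrightarrow> (\<forall>u\<in>S. \<forall>v\<in>S. \<not> adj E u v)"

lemma independent_pair: "fin_simple_graph V E \<Longrightarrow> \<not> adj E u v \<Longrightarrow> independent E {u, v}"
  by (auto simp: independent_def adj_irrefl adj_commute[of E v u])

lemma independent_dominating_imp_minimal_dominating:
  assumes "independent E D" "dominating V E D"
  shows "minimal_dominating V E D"
  unfolding minimal_dominating_def
proof (intro conjI assms allI impI notI)
  fix D' assume D': "D' \<subset> D" "dominating V E D'"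
  then obtain v where v: "v \<in> D" "v \<notin> D'" by blast
  with D'(2) assms(2) obtain u where "u \<in> D'" "adj E u v" by (auto simp: dominating_def)
  with D'(1) v(1) assms(1) show False by (auto simp: independent_def)
qed

lemma independent_extends_to_minimal_dominating:
  assumes "fin_simple_graph V E" "S \<subseteq> V" "independent E S"
  obtains I where "S \<subseteq> I" "minimal_dominating V E I"
proof -
  have fin: "finite V" using assms(1) by (simp add: fin_simple_graph_def)
  define P where "P T \<longleftrightarrow> S \<subseteq> T \<and> T \<subseteq> V \<and> independent E T" for T
  have "P S" using assms(2,3) by (simp add: P_def)
  moreover have "\<forall>T. P T \<longrightarrow> card T < Suc (card V)"
    using card_mono[OF fin] by (simp add: P_def less_Suc_eq_le)
  ultimately obtain I where I: "P I" and I_max: "\<forall>T. P T \<longrightarrow> card T \<le> card I"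
    using ex_has_greatest_nat[of P S card] by blast
  have finI: "finite I" using I rev_finite_subset[OF fin] by (simp add: P_def)
  have "dominating V E I"
    unfolding dominating_def
  proof (intro conjI ballI)
    show "I \<subseteq> V" using I by (simp add: P_def)
  next
    fix v assume v: "v \<in> V"
    show "v \<in> I \<or> (\<exists>u\<in>I. adj E u v)"
    proof (rule ccontr)
      assume undominated: "\<not> ?thesis"
      then have "\<forall>u\<in>I. \<not> adj E u v" "\<forall>u\<in>I. \<not> adj E v u" by (simp_all add: adj_commute)
      with I v adj_irrefl[OF assms(1), of v] have "P (insert v I)"
        unfolding P_def independent_def by blast
      with I_max have "card (insert v I) \<le> card I" by blast
      with finI undominated show False by simp
    qed
  qed
  with I that show ?thesis
    by (auto simp: P_def intro: independent_dominating_imp_minimal_dominating)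
qed

lemma exists_minimum_dominating:
  assumes "finite V"
  obtains D where "minimum_dominating V E D"
proof -
  have "dominating V E V" by (simp add: dominating_def)
  from ex_has_least_nat[of "dominating V E", OF this, of card] that show ?thesis
    by (auto simp: minimum_dominating_def)
qed

definition has_private_neighbours :: "'a set \<Rightarrow> 'a set set \<Rightarrow> 'a set \<Rightarrow> bool" where
  "has_private_neighbours V E D \<longleftrightarrow>
     (\<forall>a\<in>D. \<exists>p\<in>V - D. adj E a p \<and> (\<forall>b\<in>D. adj E b p \<longrightarrow> b = a))"

definition inner_edges :: "'a set set \<Rightarrow> 'a set \<Rightarrow> 'a set set" where
  "inner_edges E D = {e \<in> E. e \<subseteq> D}"

lemma no_private_neighbour_imp_isolated:
  assumes "fin_simple_graph V E" "dominating V E D" "\<not> dominating V E (D - {a})" "a \<in> D"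
    and no_private: "\<And>p. p \<in> V - D \<Longrightarrow> adj E a p \<Longrightarrow> \<exists>b\<in>D - {a}. adj E b p"
  shows "\<forall>b\<in>D. \<not> adj E b a"
proof -
  obtain v where v: "v \<in> V" "v \<notin> D - {a}" "\<forall>u\<in>D - {a}. \<not> adj E u v"
    using assms(2,3) by (auto simp: dominating_def)
  have "v = a"
  proof (rule ccontr)
    assume "v \<noteq> a"
    with v assms(2) obtain u where "u \<in> D" "adj E u v" by (auto simp: dominating_def)
    with v \<open>v \<noteq> a\<close> no_private[of v] show False by auto
  qed
  with v adj_irrefl[OF assms(1)] show ?thesis by auto
qed

lemma dominating_exchange:
  assumes "dominating V E D" "a \<in> D" "u \<in> V" "adj E a u"
    and no_private: "\<And>p. p \<in> V - D \<Longrightarrow> adj E a p \<Longrightarrow> \<exists>b\<in>D - {a}. adj E b p"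
  shows "dominating V E (insert u (D - {a}))"
  unfolding dominating_def
proof (intro conjI ballI)
  show "insert u (D - {a}) \<subseteq> V" using assms(1,3) by (auto simp: dominating_def)
next
  fix w assume w: "w \<in> V"
  show "w \<in> insert u (D - {a}) \<or> (\<exists>c\<in>insert u (D - {a}). adj E c w)"
  proof (cases "w = a \<or> w \<in> D")
    case True
    then show ?thesis using assms(4) by (auto simp: adj_commute)
  next
    case False
    with w assms(1) obtain c where "c \<in> D" "adj E c w" by (auto simp: dominating_def)
    with False w no_private[of w] show ?thesis by (cases "c = a") auto
  qed
qed

lemma inner_edges_exchange_psubset:
  assumes "fin_simple_graph V E" "\<forall>b\<in>D. \<not> adj E b a" "u \<notin> D" "b \<in> D - {a}" "adj E b u"
  shows "inner_edges E D \<subset> inner_edges E (insert u (D - {a}))"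
proof (rule psubsetI)
  have "a \<notin> e" if e: "e \<in> E" "e \<subseteq> D" for e
  proof -
    obtain p1 p2 where "e = {p1, p2}"
      using assms(1) e(1) by (auto simp: fin_simple_graph_def card_2_iff)
    with e assms(2) show ?thesis by (auto simp: adj_def insert_commute)
  qed
  then show "inner_edges E D \<subseteq> inner_edges E (insert u (D - {a}))"
    unfolding inner_edges_def by blast
  have "{b, u} \<in> inner_edges E (insert u (D - {a}))" "{b, u} \<notin> inner_edges E D"
    using assms(3-5) by (auto simp: inner_edges_def adj_def)
  then show "inner_edges E D \<noteq> inner_edges E (insert u (D - {a}))" by blast
qed

text \<open>Bollobas and Cockayne: take a minimum dominating set with the most inner edges; a vertex
  without external private neighbour could be exchanged for a neighbour, creating an inner edge.\<close>
lemma exists_minimum_dominating_with_private_neighbours: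
  assumes G: "fin_simple_graph V E" and no_isolated: "\<And>v. v \<in> V \<Longrightarrow> \<exists>u\<in>V. adj E v u"
  obtains D where "minimum_dominating V E D" "has_private_neighbours V E D"
proof -
  have fin: "finite V" using G by (simp add: fin_simple_graph_def)
  have finE: "finite E"
    using G finite_subset[of E "Pow V"] by (auto simp: fin_simple_graph_def)
  then have "\<forall>D. minimum_dominating V E D \<longrightarrow> card (inner_edges E D) < Suc (card E)"
    using card_mono[OF finE] by (simp add: inner_edges_def less_Suc_eq_le)
  moreover obtain D0 where "minimum_dominating V E D0" using exists_minimum_dominating[OF fin] .
  ultimately obtain D where D: "minimum_dominating V E D"
    and D_max: "\<forall>D'. minimum_dominating V E D' \<longrightarrow> card (inner_edges E D') \<le> card (inner_edges E D)"
    using ex_has_greatest_nat[of "minimum_dominating V E" D0 "\<lambda>D. card (inner_edges E D)"] by blast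
  have dom: "dominating V E D" using D by (simp add: minimum_dominating_def)
  have finD: "finite D" using dom rev_finite_subset[OF fin] by (simp add: dominating_def)
  have "has_private_neighbours V E D"
    unfolding has_private_neighbours_def
  proof (rule ballI, rule ccontr)
    fix a assume a: "a \<in> D" and "\<not> (\<exists>p\<in>V - D. adj E a p \<and> (\<forall>b\<in>D. adj E b p \<longrightarrow> b = a))"
    then have no_private: "\<And>p. p \<in> V - D \<Longrightarrow> adj E a p \<Longrightarrow> \<exists>b\<in>D - {a}. adj E b p" by blast
    have "\<not> dominating V E (D - {a})"
      using D a finD card_Diff1_less[OF finD a] by (force simp: minimum_dominating_def)
    then have isolated: "\<forall>b\<in>D. \<not> adj E b a"
      using no_private_neighbour_imp_isolated[OF G dom _ a no_private] by blast
    have "a \<in> V" using a dom by (auto simp: dominating_def)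
    then obtain u where u: "u \<in> V" "adj E a u" using no_isolated by blast
    with isolated have "u \<notin> D" by (auto simp: adj_commute)
    with u no_private obtain b where b: "b \<in> D - {a}" "adj E b u" by blast
    define D' where "D' = insert u (D - {a})"
    have "card D' = card D"
      using finD \<open>u \<notin> D\<close> card_Suc_Diff1[OF finD a] by (simp add: D'_def)
    with D dominating_exchange[OF dom a u no_private] have "minimum_dominating V E D'"
      by (simp add: D'_def minimum_dominating_def)
    moreover have "card (inner_edges E D) < card (inner_edges E D')"
      unfolding D'_def using inner_edges_exchange_psubset[OF G isolated \<open>u \<notin> D\<close> b]
      by (intro psubset_card_mono) (simp add: inner_edges_def finE)
    ultimately show False using D_max by fastforce
  qed
  with D that show ?thesis by blast
qed

lemma cart_adj_fst: "g \<in> VG \<Longrightarrow> adj EH h h' \<Longrightarrow> adj (cart_edges VG EG VH EH) (g, h) (g, h')"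
  unfolding adj_def cart_edges_def by blast

lemma cart_adj_snd: "h \<in> VH \<Longrightarrow> adj EG g g' \<Longrightarrow> adj (cart_edges VG EG VH EH) (g, h) (g', h)"
  unfolding adj_def cart_edges_def by blast

lemma cart_adjE:
  "adj (cart_edges VG EG VH EH) (g, h) (g', h') \<Longrightarrow> (g = g' \<and> adj EH h h') \<or> (h = h' \<and> adj EG g g')"
  unfolding adj_def cart_edges_def by (auto simp: doubleton_eq_iff insert_commute)

lemma minimal_dominating_cart_times:
  assumes "dominating VG EG D" "has_private_neighbours VG EG D"
  shows "minimal_dominating (VG \<times> VH) (cart_edges VG EG VH EH) (D \<times> VH)"
  unfolding minimal_dominating_def
proof (intro conjI allI impI notI)
  show "dominating (VG \<times> VH) (cart_edges VG EG VH EH) (D \<times> VH)"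
    unfolding dominating_def
  proof (intro conjI ballI)
    show "D \<times> VH \<subseteq> VG \<times> VH" using assms(1) by (auto simp: dominating_def)
  next
    fix gh assume "gh \<in> VG \<times> VH"
    then obtain g h where gh: "gh = (g, h)" "g \<in> VG" "h \<in> VH" by blast
    show "gh \<in> D \<times> VH \<or> (\<exists>u\<in>D \<times> VH. adj (cart_edges VG EG VH EH) u gh)"
    proof (cases "g \<in> D")
      case False
      with gh assms(1) obtain c where "c \<in> D" "adj EG c g" by (auto simp: dominating_def)
      with gh cart_adj_snd[of h VH EG c g] show ?thesis by blast
    qed (use gh in simp)
  qed
next
  fix D' assume D': "D' \<subset> D \<times> VH" "dominating (VG \<times> VH) (cart_edges VG EG VH EH) D'"
  obtain q where "q \<in> D \<times> VH - D'" using psubset_imp_ex_mem[OF D'(1)] ..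
  then obtain a h where ah: "a \<in> D" "h \<in> VH" "(a, h) \<notin> D'" by blast
  obtain p where p: "p \<in> VG - D" "adj EG a p" "\<forall>b\<in>D. adj EG b p \<longrightarrow> b = a"
    using assms(2) ah(1) unfolding has_private_neighbours_def by blast
  have "(p, h) \<in> VG \<times> VH - D'" using p(1) ah(2) D'(1) by blast
  with D'(2) obtain u where "u \<in> D'" "adj (cart_edges VG EG VH EH) u (p, h)"
    unfolding dominating_def by blast
  moreover obtain c k where "u = (c, k)" by fastforce
  ultimately have "(c, k) \<in> D'" "adj (cart_edges VG EG VH EH) (c, k) (p, h)" by simp_all
  with D'(1) p ah(3) show False by (auto dest!: cart_adjE)
qed

lemma dominating_cart_times_remove:
  assumes "dominating VG EG I" "x \<in> I"
    and x_redundant: "\<And>g. g \<in> VG - I \<Longrightarrow> adj EG x g \<Longrightarrow> \<exists>c\<in>I - {x}. adj EG c g"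
    and "h' \<in> VH" "h' \<noteq> h" "adj EH h' h"
  shows "dominating (VG \<times> VH) (cart_edges VG EG VH EH) (I \<times> VH - {(x, h)})"
  unfolding dominating_def
proof (intro conjI ballI)
  show "I \<times> VH - {(x, h)} \<subseteq> VG \<times> VH" using assms(1) by (auto simp: dominating_def)
next
  fix gk assume gk: "gk \<in> VG \<times> VH"
  then obtain g k where g: "gk = (g, k)" "g \<in> VG" "k \<in> VH" by auto
  show "gk \<in> I \<times> VH - {(x, h)} \<or> (\<exists>u\<in>I \<times> VH - {(x, h)}. adj (cart_edges VG EG VH EH) u gk)"
  proof (cases "g \<in> I")
    case True
    with g assms(2,4-6) show ?thesis by (cases "gk = (x, h)") (auto intro: cart_adj_fst)
  next
    case False
    with g assms(1) obtain c where "c \<in> I" "adj EG c g" by (auto simp: dominating_def)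
    with False g x_redundant[of g] obtain c' where "c' \<in> I - {x}" "adj EG c' g"
      by (cases "c = x") auto
    with g show ?thesis by (auto intro: cart_adj_snd)
  qed
qed

lemma cart_not_well_dominated:
  assumes "finite VG" "finite VH"
    and A: "dominating VG EG A" "has_private_neighbours VG EG A"
    and I: "dominating VG EG I" "card I \<le> card A" "x \<in> I"
    and x_redundant: "\<And>g. g \<in> VG - I \<Longrightarrow> adj EG x g \<Longrightarrow> \<exists>c\<in>I - {x}. adj EG c g"
    and h: "h \<in> VH" "h' \<in> VH" "h' \<noteq> h" "adj EH h' h"
  shows "\<not> well_dominated (VG \<times> VH) (cart_edges VG EG VH EH)"
proof
  assume "well_dominated (VG \<times> VH) (cart_edges VG EG VH EH)"
  with minimal_dominating_cart_times[OF A] dominating_cart_times_remove[OF I(1,3) x_redundant h(2-4)]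
  have "card (A \<times> VH) \<le> card (I \<times> VH - {(x, h)})"
    by (auto simp: well_dominated_def minimum_dominating_def)
  moreover have "finite I" using I(1) rev_finite_subset[OF assms(1)] by (simp add: dominating_def)
  then have "card (I \<times> VH - {(x, h)}) < card (I \<times> VH)"
    using I(3) h(1) assms(2) by (intro card_Diff1_less) auto
  ultimately show False
    using mult_le_mono1[OF I(2), of "card VH"] by (simp add: card_cartesian_product)
qed

lemma low_degree_vertex_in_minimal_dominating:
  assumes G: "fin_simple_graph V E" "connected_graph V E" "card V \<ge> 3"
    and x: "x \<in> V" "degree V E x < 2"
  obtains I where "minimal_dominating V E I" "x \<in> I"
    "\<And>g. g \<in> V - I \<Longrightarrow> adj E x g \<Longrightarrow> \<exists>c\<in>I - {x}. adj E c g"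
proof -
  obtain y z where z: "adj E y z" "z \<in> V" "z \<noteq> x" and leaf: "\<And>u. adj E x u \<Longrightarrow> u = y"
    using low_degree_vertex_is_leaf_of_path[OF G x] by blast
  have "\<not> adj E x z" using leaf z(1) adj_irrefl[OF G(1)] by blast
  with G(1) have "independent E {x, z}" by (rule independent_pair)
  moreover have "{x, z} \<subseteq> V" using x(1) z(2) by simp
  ultimately obtain I where I: "{x, z} \<subseteq> I" "minimal_dominating V E I"
    using independent_extends_to_minimal_dominating[OF G(1)] by metis
  moreover have "\<exists>c\<in>I - {x}. adj E c g" if "adj E x g" for g
  proof -
    have "adj E z g" using leaf[OF that] z(1) by (simp add: adj_commute)
    then show ?thesis using I(1) z(3) by blast
  qed
  ultimately show ?thesis using that by blast
qed

theorem corollary20: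
  fixes VG :: "'a set" and EG :: "'a set set" and VH :: "'b set" and EH :: "'b set set"
  assumes "fin_simple_graph VG EG" and "connected_graph VG EG"
    and "well_dominated VG EG" and "card VG \<ge> 3"
    and "fin_simple_graph VH EH" and "connected_graph VH EH" and "card VH \<ge> 2"
    and "well_dominated (VG \<times> VH) (cart_edges VG EG VH EH)"
  shows "min_degree VG EG \<ge> 2"
proof (rule ccontr)
  have finG: "finite VG" and finH: "finite VH" using assms(1,5) by (auto simp: fin_simple_graph_def)
  assume "\<not> min_degree VG EG \<ge> 2"
  then obtain x where x: "x \<in> VG" "degree VG EG x < 2"
    using exists_vertex_of_min_degree[OF finG, of EG] assms(4) by fastforce
  obtain I where I: "minimal_dominating VG EG I" "x \<in> I"
    and x_redundant: "\<And>g. g \<in> VG - I \<Longrightarrow> adj EG x g \<Longrightarrow> \<exists>c\<in>I - {x}. adj EG c g"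
    using low_degree_vertex_in_minimal_dominating[OF assms(1,2,4) x] by blast
  have "\<exists>u\<in>VG. adj EG v u" if "v \<in> VG" for v
    using connected_graph_has_neighbour[OF assms(2) finG _ that] assms(4) by simp
  then obtain A where A: "minimum_dominating VG EG A" "has_private_neighbours VG EG A"
    by (rule exists_minimum_dominating_with_private_neighbours[OF assms(1)])
  obtain h where h: "h \<in> VH" using assms(7) by fastforce
  then obtain h' where h': "h' \<in> VH" "adj EH h h'"
    using connected_graph_has_neighbour[OF assms(6) finH assms(7)] by blast
  have "card I \<le> card A"
    using assms(3) I(1) A(1) by (auto simp: well_dominated_def minimum_dominating_def)
  moreover have "h \<noteq> h'" "adj EH h' h" using h'(2) adj_irrefl[OF assms(5)] adj_commute by metis+
  moreover have "dominating VG EG A" "dominating VG EG I"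
    using A(1) I(1) by (auto simp: minimum_dominating_def minimal_dominating_def)
  ultimately have "\<not> well_dominated (VG \<times> VH) (cart_edges VG EG VH EH)"
    using cart_not_well_dominated[OF finG finH _ A(2) _ _ I(2) x_redundant h h'(1)] by blast
  with assms(8) show False by contradiction
qed

end
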